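(* If $V\subset\mathcal{A}_0$ is compact, then $(\mathrm{bor}(V))^*=V^*$.
   Context: $D=\{z:|z|<1\}$, $\overline D$ its closure. $\mathcal{A}$ is the space of functions $f(z)=\sum_{k\ge0}a_k(f)z^k$ analytic in $D$, with the topology of locally uniform convergence; $\mathcal{A}_0=\{f\in\mathcal{A}: a_0(f)=1\}$. The Hadamard product is $(f*g)(z)=\sum_{k\ge0}a_k(f)a_k(g)z^k$. For $W\subset\mathcal{A}_0$, $W^*=\{g\in\mathcal{A}_0:(f*g)(z)\ne0 \ \forall z\in D,\ \forall f\in W\}$. For $x\in\overline D$, $(P_xf)(z)=f(xz)$. Let $e\equiv1$. If $V\ne\{e\}$, an element $f\in V$ is a border element of $V$ if whenever $f=P_xg$ with $g\in V$, $x\in\overline D$, then $|x|=1$; $\mathrm{bor}(V)$ is the set of border elements. If $V=\{e\}$, $\mathrm{bor}(V)=\{e\}$. *)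

theory Defs
  imports "HOL-Analysis.Analysis"
begin

abbreviation unit_disc :: "complex set" where "unit_disc \<equiv> ball 0 1"

text \<open>The space A of analytic functions on D. Functions are represented extensionally:
  holomorphic on D and equal to 0 outside D, so that equality of elements of A is
  equality as functions on D.\<close>
definition anA :: "(complex \<Rightarrow> complex) set" where
  "anA = {f. f holomorphic_on unit_disc \<and> (\<forall>z. z \<notin> unit_disc \<longrightarrow> f z = 0)}"

definition coeff_a :: "nat \<Rightarrow> (complex \<Rightarrow> complex) \<Rightarrow> complex" where
  "coeff_a k f = (deriv ^^ k) f 0 / fact k"

definition anA0 :: "(complex \<Rightarrow> complex) set" where
  "anA0 = {f \<in> anA. coeff_a 0 f = 1}"

text \<open>Topology of locally uniform convergence on A.\<close>
definition lu_top :: "(complex \<Rightarrow> complex) topology" where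
  "lu_top = topology (\<lambda>U. U \<subseteq> anA \<and>
     (\<forall>f\<in>U. \<exists>K e. compact K \<and> K \<subseteq> unit_disc \<and> e > 0 \<and>
        {g \<in> anA. \<forall>z\<in>K. cmod (g z - f z) < e} \<subseteq> U))"

definition hadamard :: "(complex \<Rightarrow> complex) \<Rightarrow> (complex \<Rightarrow> complex) \<Rightarrow> complex \<Rightarrow> complex" where
  "hadamard f g = (\<lambda>z. if z \<in> unit_disc then (\<Sum>k. coeff_a k f * coeff_a k g * z ^ k) else 0)"

definition dual :: "(complex \<Rightarrow> complex) set \<Rightarrow> (complex \<Rightarrow> complex) set" where
  "dual W = {g \<in> anA0. \<forall>f\<in>W. \<forall>z\<in>unit_disc. hadamard f g z \<noteq> 0}"

definition Pop :: "complex \<Rightarrow> (complex \<Rightarrow> complex) \<Rightarrow> complex \<Rightarrow> complex" where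
  "Pop x f = (\<lambda>z. if z \<in> unit_disc then f (x * z) else 0)"

definition e_one :: "complex \<Rightarrow> complex" where
  "e_one = (\<lambda>z. if z \<in> unit_disc then 1 else 0)"

definition bor :: "(complex \<Rightarrow> complex) set \<Rightarrow> (complex \<Rightarrow> complex) set" where
  "bor V = (if V = {e_one} then {e_one}
            else {f \<in> V. \<forall>g\<in>V. \<forall>x\<in>cball 0 1. f = Pop x g \<longrightarrow> cmod x = 1})"

end

theory Submission
  imports Defs "HOL-Complex_Analysis.Complex_Analysis"
begin

(*
  Fix f in V other than e. The pairs (h, x) in V x (closed disc) with f = P_x h include (f, 1)
  and form a compact set: evaluation (h, x) |-> h(xz) is continuous for locally uniform
  convergence, so the set is closed in the compact space V x (closed disc). Take such a pair
  with |x| minimal. Then x is nonzero because P_0 h = e, and minimality makes h a border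
  element: h = P_y k gives f = P_{xy} k, so |x| <= |xy|, i.e. |y| = 1. Since
  (P_x h * g)(z) = (h * g)(xz) and (e * g)(z) = 1, the non-vanishing of b * g for all border
  elements b carries over to all of V.
*)

definition lu_open :: "(complex \<Rightarrow> complex) set \<Rightarrow> bool" where
  "lu_open U \<longleftrightarrow> U \<subseteq> anA \<and>
     (\<forall>f\<in>U. \<exists>K e. compact K \<and> K \<subseteq> unit_disc \<and> e > 0 \<and>
        {g \<in> anA. \<forall>z\<in>K. cmod (g z - f z) < e} \<subseteq> U)"

lemma istopology_lu_open: "istopology lu_open"
  unfolding istopology_def
proof (intro conjI allI impI)
  fix S T assume S: "lu_open S" and T: "lu_open T"
  show "lu_open (S \<inter> T)"
    unfolding lu_open_def
  proof (intro conjI ballI)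
    fix f assume f: "f \<in> S \<inter> T"
    obtain K1 e1 where "compact K1" "K1 \<subseteq> unit_disc" "e1 > 0"
        "{g \<in> anA. \<forall>z\<in>K1. cmod (g z - f z) < e1} \<subseteq> S" using S f unfolding lu_open_def by blast
    moreover obtain K2 e2 where "compact K2" "K2 \<subseteq> unit_disc" "e2 > 0"
        "{g \<in> anA. \<forall>z\<in>K2. cmod (g z - f z) < e2} \<subseteq> T" using T f unfolding lu_open_def by blast
    ultimately show "\<exists>K e. compact K \<and> K \<subseteq> unit_disc \<and> e > 0 \<and>
        {g \<in> anA. \<forall>z\<in>K. cmod (g z - f z) < e} \<subseteq> S \<inter> T"
      by (intro exI[of _ "K1 \<union> K2"] exI[of _ "min e1 e2"]) auto
  qed (use S in \<open>auto simp: lu_open_def\<close>)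
next
  fix \<U> assume "\<forall>U\<in>\<U>. lu_open U"
  then show "lu_open (\<Union>\<U>)"
    unfolding lu_open_def by (meson Union_iff Union_least Union_upper subset_trans)
qed

lemma openin_lu_top: "openin lu_top = lu_open"
  unfolding lu_top_def lu_open_def[abs_def, symmetric] using istopology_lu_open by simp

lemma topspace_lu_top: "topspace lu_top = anA"
proof -
  have "lu_open anA"
    unfolding lu_open_def by (auto intro!: exI[of _ "{}"] exI[of _ "1::real"])
  then show ?thesis
    unfolding topspace_def openin_lu_top lu_open_def by blast
qed

lemma openin_lu_top_uniform_nbhd:
  assumes "compact K" "K \<subseteq> unit_disc" "h \<in> anA"
  shows "openin lu_top {g \<in> anA. \<forall>w\<in>K. cmod (g w - h w) < e}"
  unfolding openin_lu_top lu_open_def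
proof (intro conjI ballI)
  fix g0 assume g0: "g0 \<in> {g \<in> anA. \<forall>w\<in>K. cmod (g w - h w) < e}"
  show "\<exists>K' e'. compact K' \<and> K' \<subseteq> unit_disc \<and> e' > 0 \<and>
      {g \<in> anA. \<forall>z\<in>K'. cmod (g z - g0 z) < e'} \<subseteq> {g \<in> anA. \<forall>w\<in>K. cmod (g w - h w) < e}"
  proof (cases "K = {}")
    case False
    have "(\<lambda>w. g0 w - h w) holomorphic_on unit_disc"
      using g0 assms(3) unfolding anA_def by (intro holomorphic_intros) auto
    then have "continuous_on K (\<lambda>w. cmod (g0 w - h w))"
      by (intro continuous_on_norm holomorphic_on_imp_continuous_on holomorphic_on_subset[OF _ assms(2)])
    then obtain w0 where w0: "w0 \<in> K" "\<And>w. w \<in> K \<Longrightarrow> cmod (g0 w - h w) \<le> cmod (g0 w0 - h w0)"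
      using continuous_attains_sup[OF assms(1) False] by blast
    have "{g \<in> anA. \<forall>z\<in>K. cmod (g z - g0 z) < e - cmod (g0 w0 - h w0)}
        \<subseteq> {g \<in> anA. \<forall>w\<in>K. cmod (g w - h w) < e}"
    proof safe
      fix g w assume "\<forall>z\<in>K. cmod (g z - g0 z) < e - cmod (g0 w0 - h w0)" "w \<in> K"
      then show "cmod (g w - h w) < e"
        using w0(2)[of w] norm_triangle_ineq[of "g w - g0 w" "g0 w - h w"] by fastforce
    qed
    moreover have "e - cmod (g0 w0 - h w0) > 0" using g0 w0(1) by auto
    ultimately show ?thesis using assms by blast
  qed (auto intro!: exI[of _ "1::real"])
qed auto

lemma lu_eval_continuity_radius:
  assumes "h \<in> anA" "w0 \<in> unit_disc" "\<epsilon> > 0"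
  obtains \<rho> where "\<rho> > 0" "cball w0 \<rho> \<subseteq> unit_disc"
    "\<And>g w. \<forall>v\<in>cball w0 \<rho>. cmod (g v - h v) < \<epsilon>/2 \<Longrightarrow> w \<in> ball w0 \<rho> \<Longrightarrow> dist (g w) (h w0) < \<epsilon>"
proof -
  have "continuous_on unit_disc h"
    using assms(1) unfolding anA_def by (auto intro: holomorphic_on_imp_continuous_on)
  then obtain \<delta> where \<delta>: "\<delta> > 0" "\<And>w. w \<in> unit_disc \<Longrightarrow> dist w w0 < \<delta> \<Longrightarrow> dist (h w) (h w0) < \<epsilon>/2"
    unfolding continuous_on_iff using assms(2,3) by (metis half_gt_zero)
  obtain r where r: "r > 0" "cball w0 r \<subseteq> unit_disc"
    using assms(2) open_contains_cball[of unit_disc] by blast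
  show thesis
  proof
    show "min r \<delta> > 0" "cball w0 (min r \<delta>) \<subseteq> unit_disc" using r \<delta>(1) by auto
    fix g w assume g: "\<forall>v\<in>cball w0 (min r \<delta>). cmod (g v - h v) < \<epsilon>/2" and w: "w \<in> ball w0 (min r \<delta>)"
    have "w \<in> cball w0 r" using w by simp
    with r(2) have "w \<in> unit_disc" by blast
    have "cmod (g w - h w0) \<le> cmod (g w - h w) + cmod (h w - h w0)"
      using norm_triangle_ineq[of "g w - h w" "h w - h w0"] by simp
    also have "\<dots> < \<epsilon>/2 + \<epsilon>/2"
    proof (rule add_strict_mono)
      show "cmod (g w - h w) < \<epsilon>/2" using g w by auto
      show "cmod (h w - h w0) < \<epsilon>/2"
        using \<delta>(2)[OF \<open>w \<in> unit_disc\<close>] w by (simp add: dist_norm norm_minus_commute)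
    qed
    finally show "dist (g w) (h w0) < \<epsilon>" by (simp add: dist_norm)
  qed
qed

lemma continuous_map_lu_eval:
  "continuous_map (prod_topology lu_top (top_of_set unit_disc)) euclidean (\<lambda>(h, w). h w)"
  unfolding continuous_map_def
proof (intro conjI allI impI)
  fix U :: "complex set" assume "openin euclidean U"
  let ?X = "prod_topology lu_top (top_of_set unit_disc)"
  show "openin ?X {p \<in> topspace ?X. (case p of (h, w) \<Rightarrow> h w) \<in> U}"
  proof (subst openin_subopen, safe)
    fix h w0 assume hw0: "(h, w0) \<in> topspace ?X" "h w0 \<in> U"
    then have h: "h \<in> anA" and w0: "w0 \<in> unit_disc" by (auto simp: topspace_lu_top)
    obtain \<epsilon> where \<epsilon>: "\<epsilon> > 0" "ball (h w0) \<epsilon> \<subseteq> U"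
      using \<open>openin euclidean U\<close> hw0(2) by (auto simp: open_contains_ball)
    obtain \<rho> where \<rho>: "\<rho> > 0" "cball w0 \<rho> \<subseteq> unit_disc"
      and close: "\<And>g w. \<forall>v\<in>cball w0 \<rho>. cmod (g v - h v) < \<epsilon>/2 \<Longrightarrow> w \<in> ball w0 \<rho> \<Longrightarrow> dist (g w) (h w0) < \<epsilon>"
      using lu_eval_continuity_radius[OF h w0 \<epsilon>(1)] by blast
    define N where "N = {g \<in> anA. \<forall>v\<in>cball w0 \<rho>. cmod (g v - h v) < \<epsilon>/2}"
    show "\<exists>T. openin ?X T \<and> (h, w0) \<in> T \<and> T \<subseteq> {p \<in> topspace ?X. (case p of (h, w) \<Rightarrow> h w) \<in> U}"
    proof (intro exI conjI)
      have "openin lu_top N"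
        unfolding N_def by (rule openin_lu_top_uniform_nbhd[OF compact_cball \<rho>(2) h])
      moreover have "openin (top_of_set unit_disc) (ball w0 \<rho>)"
        using subset_trans[OF ball_subset_cball \<rho>(2)] by (simp add: openin_open_eq)
      ultimately show "openin ?X (N \<times> ball w0 \<rho>)"
        by (simp add: openin_prod_Times_iff)
      show "(h, w0) \<in> N \<times> ball w0 \<rho>"
        using h \<epsilon>(1) \<rho>(1) unfolding N_def by auto
      show "N \<times> ball w0 \<rho> \<subseteq> {p \<in> topspace ?X. (case p of (h, w) \<Rightarrow> h w) \<in> U}"
      proof clarify
        fix g w assume g: "g \<in> N" and w: "w \<in> ball w0 \<rho>"
        then have "g w \<in> ball (h w0) \<epsilon>"
          using close unfolding N_def by (simp add: dist_commute)
        moreover have "w \<in> unit_disc" using w \<rho>(2) ball_subset_cball by blast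
        ultimately show "(g, w) \<in> topspace ?X \<and> g w \<in> U"
          using g \<epsilon>(2) unfolding N_def by (auto simp: topspace_lu_top)
      qed
    qed
  qed
qed auto

lemma mult_in_unit_disc: "cmod x \<le> 1 \<Longrightarrow> z \<in> unit_disc \<Longrightarrow> x * z \<in> unit_disc"
  by (metis mult_left_le_one_le norm_imp_pos_and_ge norm_mult order_le_less_trans mem_ball_0)

lemma continuous_map_lu_eval_scaled:
  assumes "z \<in> unit_disc"
  shows "continuous_map (prod_topology lu_top (top_of_set (cball 0 1))) euclidean (\<lambda>(h, x). h (x * z))"
proof -
  have "continuous_map (top_of_set (cball 0 1)) (top_of_set unit_disc) (\<lambda>x. x * z)"
    using assms mult_in_unit_disc
    by (auto simp: continuous_map_in_subtopology intro!: continuous_on_mult_right continuous_on_id)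
  from continuous_map_compose[OF continuous_map_snd this]
  have "continuous_map (prod_topology lu_top (top_of_set (cball 0 1)))
      (prod_topology lu_top (top_of_set unit_disc)) (\<lambda>(h, x). (h, x * z))"
    by (simp add: continuous_map_pairwise o_def case_prod_unfold continuous_map_fst)
  from continuous_map_compose[OF this continuous_map_lu_eval] show ?thesis
    by (simp add: o_def case_prod_unfold)
qed

lemma Pop_eq_iff: "f \<in> anA \<Longrightarrow> f = Pop x h \<longleftrightarrow> (\<forall>z\<in>unit_disc. h (x * z) = f z)"
  unfolding anA_def Pop_def fun_eq_iff by auto

lemma Pop_1: "f \<in> anA \<Longrightarrow> Pop 1 f = f"
  unfolding anA_def Pop_def fun_eq_iff by auto

lemma Pop_Pop:
  assumes "cmod x \<le> 1"
  shows "Pop x (Pop y h) = Pop (x * y) h"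
proof
  fix z show "Pop x (Pop y h) z = Pop (x * y) h z"
    using mult_in_unit_disc[OF assms, of z] by (simp add: Pop_def mult.assoc mult.left_commute)
qed

lemma Pop_0: "coeff_a 0 h = 1 \<Longrightarrow> Pop 0 h = e_one"
  unfolding Pop_def e_one_def coeff_a_def fun_eq_iff by simp

lemma holomorphic_on_scaled:
  assumes "h \<in> anA" "cmod x \<le> 1"
  shows "(\<lambda>w. h (x * w)) holomorphic_on unit_disc"
proof -
  have "(\<lambda>w. x * w) holomorphic_on unit_disc" "(\<lambda>w. x * w) ` unit_disc \<subseteq> unit_disc"
    using mult_in_unit_disc[OF assms(2)] by (auto intro: holomorphic_intros)
  with assms(1) show ?thesis
    unfolding anA_def using holomorphic_on_compose_gen[of _ unit_disc h unit_disc] by (simp add: o_def)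
qed

lemma Pop_in_anA:
  assumes "h \<in> anA" "cmod x \<le> 1"
  shows "Pop x h \<in> anA"
proof -
  have "Pop x h holomorphic_on unit_disc"
    by (rule holomorphic_transform[OF holomorphic_on_scaled[OF assms]]) (simp add: Pop_def)
  then show ?thesis unfolding anA_def by (simp add: Pop_def)
qed

lemma coeff_a_Pop:
  assumes "h \<in> anA" "cmod x \<le> 1"
  shows "coeff_a k (Pop x h) = x ^ k * coeff_a k h"
proof -
  have hol: "h holomorphic_on unit_disc" using assms(1) unfolding anA_def by simp
  have "(deriv ^^ k) (Pop x h) 0 = (deriv ^^ k) (\<lambda>w. h (x * w)) 0"
    using Pop_in_anA[OF assms] holomorphic_on_scaled[OF assms] unfolding anA_def
    by (intro higher_deriv_transform_within_open[of _ unit_disc]) (auto simp: Pop_def)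
  also have "\<dots> = x ^ k * (deriv ^^ k) h (x * 0)"
    by (rule higher_deriv_compose_linear[where S = unit_disc, OF hol _ _ _ mult_in_unit_disc[OF assms(2)]]) auto
  finally show ?thesis unfolding coeff_a_def by simp
qed

lemma hadamard_Pop:
  assumes "h \<in> anA" "cmod x \<le> 1" "z \<in> unit_disc"
  shows "hadamard (Pop x h) g z = hadamard h g (x * z)"
  unfolding hadamard_def using assms mult_in_unit_disc[OF assms(2,3)]
  by (simp add: coeff_a_Pop power_mult_distrib mult_ac)

lemma hadamard_at_0: "hadamard f g 0 = coeff_a 0 f * coeff_a 0 g"
proof -
  have "(\<lambda>k. coeff_a k f * coeff_a k g * 0 ^ k) = (\<lambda>k. if k = 0 then coeff_a k f * coeff_a k g else 0)"
    by (auto simp: fun_eq_iff)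
  then show ?thesis
    unfolding hadamard_def using sums_single[of 0 "\<lambda>k. coeff_a k f * coeff_a k g"] by (simp add: sums_iff)
qed

lemma hadamard_e_one:
  assumes "g \<in> anA0" "z \<in> unit_disc"
  shows "hadamard e_one g z = 1"
proof -
  have "g \<in> anA" "coeff_a 0 g = 1" using assms(1) unfolding anA0_def by auto
  then show ?thesis
    using hadamard_Pop[of g 0 z g] assms(2) by (simp add: Pop_0 hadamard_at_0)
qed

lemma bor_subset: "bor V \<subseteq> V"
  unfolding bor_def by auto

lemma dual_antimono: "W \<subseteq> W' \<Longrightarrow> dual W' \<subseteq> dual W"
  unfolding dual_def by auto

lemma compactin_Pop_fibre:
  assumes "compactin lu_top V" "f \<in> anA"
  shows "compactin (prod_topology lu_top (top_of_set (cball 0 1)))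
           {(h, x). h \<in> V \<and> x \<in> cball 0 1 \<and> f = Pop x h}"
proof -
  let ?X = "prod_topology lu_top (top_of_set (cball (0::complex) 1))"
  let ?E = "\<lambda>z. {p \<in> topspace ?X. (case p of (h, x) \<Rightarrow> h (x * z)) \<in> {f z}}"
  have "closedin ?X (\<Inter>z\<in>unit_disc. ?E z)"
    using closedin_continuous_map_preimage[OF continuous_map_lu_eval_scaled closed_singleton[unfolded closed_closedin]]
    by (intro closedin_Inter) auto
  moreover have "compactin ?X (V \<times> cball 0 1)"
    using assms(1) by (simp add: compactin_Times compactin_subtopology)
  moreover have "{(h, x). h \<in> V \<and> x \<in> cball 0 1 \<and> f = Pop x h} = (\<Inter>z\<in>unit_disc. ?E z) \<inter> (V \<times> cball 0 1)"
    using compactin_subset_topspace[OF assms(1)]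
    by (auto simp: Pop_eq_iff[OF assms(2)] topspace_lu_top)
  ultimately show ?thesis
    by (simp add: closed_Int_compactin)
qed

lemma minimal_scaling_imp_bor:
  assumes "V \<noteq> {e_one}" "h \<in> V" "x \<noteq> 0" "cmod x \<le> 1"
    and minimal: "\<And>k y. k \<in> V \<Longrightarrow> cmod y \<le> 1 \<Longrightarrow> Pop x h = Pop y k \<Longrightarrow> cmod x \<le> cmod y"
  shows "h \<in> bor V"
proof -
  have "cmod y = 1" if "k \<in> V" "cmod y \<le> 1" "h = Pop y k" for k y
  proof -
    have "Pop x h = Pop (x * y) k"
      using that(3) Pop_Pop[OF assms(4)] by simp
    moreover have "cmod (x * y) \<le> 1"
      using assms(4) that(2) by (simp add: norm_mult mult_le_one)
    ultimately have "cmod x * 1 \<le> cmod x * cmod y"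
      using minimal[OF that(1)] by (metis norm_mult mult_1_right)
    then show ?thesis
      using assms(3) that(2) by simp
  qed
  then show ?thesis
    unfolding bor_def using assms(1,2) by auto
qed

lemma ex_bor_Pop:
  assumes "V \<subseteq> anA0" "compactin lu_top V" "f \<in> V" "f \<noteq> e_one"
  shows "\<exists>h\<in>bor V. \<exists>x. cmod x \<le> 1 \<and> f = Pop x h"
proof -
  define Q where "Q = {(h, x). h \<in> V \<and> x \<in> cball 0 1 \<and> f = Pop x h}"
  have f: "f \<in> anA" using assms(1,3) unfolding anA0_def by auto
  have "continuous_map (prod_topology lu_top (top_of_set (cball (0::complex) 1))) euclidean (norm \<circ> snd)"
    by (intro continuous_map_compose[OF continuous_map_snd]) (simp add: continuous_on_norm_id)
  then have "compact ((norm \<circ> snd) ` Q)"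
    unfolding Q_def using image_compactin[OF compactin_Pop_fibre[OF assms(2) f]] compactin_euclidean_iff by blast
  moreover have "(f, 1) \<in> Q"
    using assms(3) Pop_1[OF f] unfolding Q_def by simp
  ultimately obtain h x where "(h, x) \<in> Q" and minimal: "\<And>q. q \<in> Q \<Longrightarrow> cmod x \<le> cmod (snd q)"
    using compact_attains_inf[of "(norm \<circ> snd) ` Q"] by fastforce
  then have h: "h \<in> V" and x: "cmod x \<le> 1" and fh: "f = Pop x h"
    unfolding Q_def by auto
  have "x \<noteq> 0"
  proof
    assume "x = 0"
    moreover have "coeff_a 0 h = 1" using h assms(1) unfolding anA0_def by auto
    ultimately show False using fh Pop_0 assms(4) by simp
  qed
  moreover have "V \<noteq> {e_one}" using assms(3,4) by auto
  ultimately have "h \<in> bor V"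
  proof (intro minimal_scaling_imp_bor[OF _ h _ x])
    fix k y assume "k \<in> V" "cmod y \<le> 1" "Pop x h = Pop y k"
    then show "cmod x \<le> cmod y" using minimal[of "(k, y)"] fh unfolding Q_def by simp
  qed
  with x fh show ?thesis by blast
qed

theorem corollary3:
  assumes "V \<subseteq> anA0" and "compactin lu_top V"
  shows "dual (bor V) = dual V"
proof
  show "dual V \<subseteq> dual (bor V)" by (rule dual_antimono[OF bor_subset])
  show "dual (bor V) \<subseteq> dual V"
  proof
    fix g assume g: "g \<in> dual (bor V)"
    have "hadamard f g z \<noteq> 0" if f: "f \<in> V" and z: "z \<in> unit_disc" for f z
    proof (cases "f = e_one")
      case True
      then show ?thesis using hadamard_e_one g z unfolding dual_def by auto
    next
      case False
      then obtain h x where h: "h \<in> bor V" and x: "cmod x \<le> 1" and fh: "f = Pop x h"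
        using ex_bor_Pop[OF assms f] by blast
      have "h \<in> anA" using h bor_subset assms(1) unfolding anA0_def by auto
      then have "hadamard f g z = hadamard h g (x * z)" using fh hadamard_Pop[OF _ x z] by simp
      then show ?thesis using g h mult_in_unit_disc[OF x z] unfolding dual_def by auto
    qed
    then show "g \<in> dual V" using g unfolding dual_def by auto
  qed
qed

end
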